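(* Let $T$ be a complete theory with monster model $\mathcal{U}$, $A\subseteq\mathcal{U}$ small, $\mu\in\mathfrak{M}_x(\mathcal{U})$, and $\nu_1,\nu_2\in\mathfrak{M}_y(\mathcal{U})$ with $\operatorname{supp}(\nu_1)\cap\operatorname{supp}(\nu_2)=\emptyset$. Suppose $\mu\blacktriangleright_A\nu_1$ and $\mu\blacktriangleright_A\nu_2$. Then there exists a finite tuple $b$ from $\mathcal{U}$ such that for all $r,s\in[0,1]$ with $r+s=1$, $\mu\blacktriangleright_{Ab}r\nu_1+s\nu_2$.
   Context: For $C\subseteq\mathcal{U}$, $\mathcal{L}_x(C)$ is the Boolean algebra of formulas in $x$ with parameters from $C$ modulo $T$, embedded in $\mathcal{L}_{xy}(C)$ via $\varphi(x)\mapsto\varphi(x)\wedge y=y$; $\mathfrak{M}_x(C)$ is the set of finitely additive probability measures on $\mathcal{L}_x(C)$. For $\omega\in\mathfrak{M}_{xy}(C)$, $\pi_x(\omega)(\varphi(x))=\omega(\varphi(x)\wedge y=y)$ (similarly $\pi_y$); $\omega|_D$ is restriction. The support $\operatorname{supp}(\nu)$ of $\nu\in\mathfrak{M}_y(\mathcal{U})$ is the set of $q\in S_y(\mathcal{U})$ such that $\nu(\psi)>0$ for every $\psi\in q$. $\mathfrak{M}^{\mathrm{Am}}_{xy}(C)$ is the set of $\lambda\in\mathfrak{M}_{xy}(C)$ with $\lambda(\varphi(x)\wedge\psi(y))=\pi_x(\lambda)(\varphi(x))\pi_y(\lambda)(\psi(y))$ for all $\varphi(x)\in\mathcal{L}_x(C),\psi(y)\in\mathcal{L}_y(C)$.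 For $\lambda\in\mathfrak{M}^{\mathrm{Am}}_{xy}(C)$ with $\pi_x(\lambda)=\mu|_C$: $\operatorname{Amal}(\lambda,\mu)=\{\omega\in\mathfrak{M}^{\mathrm{Am}}_{xy}(\mathcal{U}):\omega|_C=\lambda,\pi_x(\omega)=\mu\}$. $\mu\blacktriangleright_C\nu$ means there is $\lambda\in\mathfrak{M}_{xy}(C)$ with $\pi_x(\lambda)=\mu|_C$, $\operatorname{Amal}(\lambda,\mu)\neq\emptyset$, and $\pi_y(\omega)=\nu$ for every $\omega\in\operatorname{Amal}(\lambda,\mu)$. $Ab$ denotes $A$ together with the entries of $b$. *)

theory Defs
  imports Complex_Main
begin

text \<open>The monster model is the whole type 'u. A structure is given by interpretations
  of function symbols 'f and relation symbols 'r (symbols may be applied to argument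
  lists of any length).\<close>

datatype ('f, 'u) trm = Var nat | Par 'u | App 'f "('f, 'u) trm list"

datatype ('f, 'r, 'u) fm =
    Bot
  | Eq "('f, 'u) trm" "('f, 'u) trm"
  | Rel 'r "('f, 'u) trm list"
  | Neg "('f, 'r, 'u) fm"
  | Conj "('f, 'r, 'u) fm" "('f, 'r, 'u) fm"
  | Ex nat "('f, 'r, 'u) fm"

fun eval :: "('f \<Rightarrow> 'u list \<Rightarrow> 'u) \<Rightarrow> (nat \<Rightarrow> 'u) \<Rightarrow> ('f, 'u) trm \<Rightarrow> 'u" where
  "eval F e (Var n) = e n"
| "eval F e (Par a) = a"
| "eval F e (App f ts) = F f (map (eval F e) ts)"

fun tvars :: "('f, 'u) trm \<Rightarrow> nat set" where
  "tvars (Var n) = {n}"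
| "tvars (Par a) = {}"
| "tvars (App f ts) = (\<Union>t\<in>set ts. tvars t)"

fun tpars :: "('f, 'u) trm \<Rightarrow> 'u set" where
  "tpars (Var n) = {}"
| "tpars (Par a) = {a}"
| "tpars (App f ts) = (\<Union>t\<in>set ts. tpars t)"

fun sat :: "('f \<Rightarrow> 'u list \<Rightarrow> 'u) \<Rightarrow> ('r \<Rightarrow> 'u list \<Rightarrow> bool) \<Rightarrow> (nat \<Rightarrow> 'u)
            \<Rightarrow> ('f, 'r, 'u) fm \<Rightarrow> bool" where
  "sat F R e Bot = False"
| "sat F R e (Eq t1 t2) = (eval F e t1 = eval F e t2)"
| "sat F R e (Rel r ts) = R r (map (eval F e) ts)"
| "sat F R e (Neg \<phi>) = (\<not> sat F R e \<phi>)"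
| "sat F R e (Conj \<phi> \<psi>) = (sat F R e \<phi> \<and> sat F R e \<psi>)"
| "sat F R e (Ex n \<phi>) = (\<exists>a. sat F R (e(n := a)) \<phi>)"

fun fv :: "('f, 'r, 'u) fm \<Rightarrow> nat set" where
  "fv Bot = {}"
| "fv (Eq t1 t2) = tvars t1 \<union> tvars t2"
| "fv (Rel r ts) = (\<Union>t\<in>set ts. tvars t)"
| "fv (Neg \<phi>) = fv \<phi>"
| "fv (Conj \<phi> \<psi>) = fv \<phi> \<union> fv \<psi>"
| "fv (Ex n \<phi>) = fv \<phi> - {n}"

fun params :: "('f, 'r, 'u) fm \<Rightarrow> 'u set" where
  "params Bot = {}"
| "params (Eq t1 t2) = tpars t1 \<union> tpars t2"
| "params (Rel r ts) = (\<Union>t\<in>set ts. tpars t)"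
| "params (Neg \<phi>) = params \<phi>"
| "params (Conj \<phi> \<psi>) = params \<phi> \<union> params \<psi>"
| "params (Ex n \<phi>) = params \<phi>"

definition saturated :: "('f \<Rightarrow> 'u list \<Rightarrow> 'u) \<Rightarrow> ('r \<Rightarrow> 'u list \<Rightarrow> bool) \<Rightarrow> 'k rel \<Rightarrow> bool" where
  "saturated F R \<kappa> \<longleftrightarrow>
     (\<forall>(C :: 'u set) (\<Sigma> :: ('f, 'r, 'u) fm set).
        (card_of C, \<kappa>) \<in> ordLess \<longrightarrow>
        (\<forall>\<phi>\<in>\<Sigma>. fv \<phi> \<subseteq> {0} \<and> params \<phi> \<subseteq> C) \<longrightarrow>
        (\<forall>\<Delta>. \<Delta> \<subseteq> \<Sigma> \<and> finite \<Delta> \<longrightarrow> (\<exists>e. \<forall>\<phi>\<in>\<Delta>. sat F R e \<phi>)) \<longrightarrow>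
        (\<exists>a. \<forall>\<phi>\<in>\<Sigma>. sat F R (\<lambda>_. a) \<phi>))"

definition automorphism :: "('f \<Rightarrow> 'u list \<Rightarrow> 'u) \<Rightarrow> ('r \<Rightarrow> 'u list \<Rightarrow> bool) \<Rightarrow> ('u \<Rightarrow> 'u) \<Rightarrow> bool" where
  "automorphism F R g \<longleftrightarrow> bij g \<and>
     (\<forall>f us. g (F f us) = F f (map g us)) \<and> (\<forall>r us. R r us = R r (map g us))"

definition elementary_on :: "('f \<Rightarrow> 'u list \<Rightarrow> 'u) \<Rightarrow> ('r \<Rightarrow> 'u list \<Rightarrow> bool) \<Rightarrow> 'u set \<Rightarrow> ('u \<Rightarrow> 'u) \<Rightarrow> bool" where
  "elementary_on F R D f \<longleftrightarrow>
     (\<forall>(\<phi> :: ('f, 'r, 'u) fm) e. params \<phi> = {} \<longrightarrow> (\<forall>n\<in>fv \<phi>. e n \<in> D) \<longrightarrow>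
        (sat F R e \<phi> \<longleftrightarrow> sat F R (f \<circ> e) \<phi>))"

definition strongly_homogeneous :: "('f \<Rightarrow> 'u list \<Rightarrow> 'u) \<Rightarrow> ('r \<Rightarrow> 'u list \<Rightarrow> bool) \<Rightarrow> 'k rel \<Rightarrow> bool" where
  "strongly_homogeneous F R \<kappa> \<longleftrightarrow>
     (\<forall>(D :: 'u set) f. (card_of D, \<kappa>) \<in> ordLess \<longrightarrow> elementary_on F R D f \<longrightarrow>
        (\<exists>g. automorphism F R g \<and> (\<forall>d\<in>D. g d = f d)))"

text \<open>Monster model for the complete theory T = Th(U): kappa-saturated and strongly
  kappa-homogeneous, kappa an uncountable cardinal larger than the language.\<close>
definition monster :: "('f \<Rightarrow> 'u list \<Rightarrow> 'u) \<Rightarrow> ('r \<Rightarrow> 'u list \<Rightarrow> bool) \<Rightarrow> 'k rel \<Rightarrow> bool" where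
  "monster F R \<kappa> \<longleftrightarrow> Card_order \<kappa> \<and> (natLeq, \<kappa>) \<in> ordLess \<and>
     (card_of (UNIV :: 'f set), \<kappa>) \<in> ordLess \<and> (card_of (UNIV :: 'r set), \<kappa>) \<in> ordLess \<and>
     saturated F R \<kappa> \<and> strongly_homogeneous F R \<kappa>"

text \<open>L_x(C): formulas in the variables x with parameters from C modulo T, represented by
  the sets of assignments they define in the monster model. With this representation
  phi(x) and phi(x) /\ y = y are literally the same element, so L_x(C) is a subalgebra
  of L_xy(C).\<close>
definition Lalg :: "('f \<Rightarrow> 'u list \<Rightarrow> 'u) \<Rightarrow> ('r \<Rightarrow> 'u list \<Rightarrow> bool) \<Rightarrow> nat list \<Rightarrow> 'u set
                    \<Rightarrow> (nat \<Rightarrow> 'u) set set" where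
  "Lalg F R x C = {{e. sat F R e \<phi>} | \<phi> :: ('f, 'r, 'u) fm. fv \<phi> \<subseteq> set x \<and> params \<phi> \<subseteq> C}"

definition keisler :: "(nat \<Rightarrow> 'u) set set \<Rightarrow> ((nat \<Rightarrow> 'u) set \<Rightarrow> real) \<Rightarrow> bool" where
  "keisler B \<mu> \<longleftrightarrow> \<mu> UNIV = 1 \<and> (\<forall>X\<in>B. 0 \<le> \<mu> X) \<and>
     (\<forall>X\<in>B. \<forall>Y\<in>B. X \<inter> Y = {} \<longrightarrow> \<mu> (X \<union> Y) = \<mu> X + \<mu> Y)"

text \<open>Measures are functions; two measures are equal on an algebra if they agree on it.\<close>
definition agree :: "(nat \<Rightarrow> 'u) set set \<Rightarrow> ((nat \<Rightarrow> 'u) set \<Rightarrow> real) \<Rightarrow> ((nat \<Rightarrow> 'u) set \<Rightarrow> real) \<Rightarrow> bool" where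
  "agree B \<mu> \<nu> \<longleftrightarrow> (\<forall>X\<in>B. \<mu> X = \<nu> X)"

definition Mx where "Mx F R x C = {\<mu>. keisler (Lalg F R x C) \<mu>}"

definition MAm where
  "MAm F R x y C = {lam. keisler (Lalg F R (x @ y) C) lam \<and>
     (\<forall>X\<in>Lalg F R x C. \<forall>Y\<in>Lalg F R y C. lam (X \<inter> Y) = lam X * lam Y)}"

definition Amal where
  "Amal F R x y C lam \<mu> = {\<omega>. \<omega> \<in> MAm F R x y UNIV \<and> agree (Lalg F R (x @ y) C) \<omega> lam \<and>
                             agree (Lalg F R x UNIV) \<omega> \<mu>}"

definition triangle where
  "triangle F R x y C \<mu> \<nu> \<longleftrightarrow>
     (\<exists>lam. lam \<in> Mx F R (x @ y) C \<and> agree (Lalg F R x C) lam \<mu> \<and>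
          Amal F R x y C lam \<mu> \<noteq> {} \<and>
          (\<forall>\<omega>\<in>Amal F R x y C lam \<mu>. agree (Lalg F R y UNIV) \<omega> \<nu>))"

text \<open>S_y(U): complete types = ultrafilters of the Boolean algebra L_y(U).\<close>
definition is_type :: "(nat \<Rightarrow> 'u) set set \<Rightarrow> (nat \<Rightarrow> 'u) set set \<Rightarrow> bool" where
  "is_type B q \<longleftrightarrow> q \<subseteq> B \<and> UNIV \<in> q \<and> {} \<notin> q \<and>
     (\<forall>X\<in>q. \<forall>Y\<in>q. X \<inter> Y \<in> q) \<and> (\<forall>X\<in>q. \<forall>Y\<in>B. X \<subseteq> Y \<longrightarrow> Y \<in> q) \<and>
     (\<forall>X\<in>B. X \<in> q \<or> - X \<in> q)"

definition supp where
  "supp F R y \<nu> = {q. is_type (Lalg F R y UNIV) q \<and> (\<forall>X\<in>q. 0 < \<nu> X)}"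

end

theory Submission
  imports Defs
begin

(* Since the supports of nu1 and nu2 are disjoint, some formula P(y) has nu1-measure 1 and
   nu2-measure 0: otherwise the sets of nu1-measure 1 together with those of nu2-measure 1
   generate a proper filter, and any type extending it lies in both supports. Let b list the
   parameters of P. Pick amalgams omega1 in Amal(lambda1, mu) and omega2 in Amal(lambda2, mu)
   witnessing mu |>_A nu1 and mu |>_A nu2. The mixture omega = r omega1 + s omega2 is again an
   amalgam with x-marginal mu, and lambda := omega restricted to Ab works: every omega' in
   Amal(lambda, mu) gives P measure r, and omega' conditioned on P lies in Amal(lambda1, mu), so
   omega'(psi /\ P) = r nu1(psi); symmetrically omega'(psi /\ ~P) = s nu2(psi). *)

section \<open>Finitely additive probability measures on algebras of sets\<close>

definition set_algebra :: "'a set set \<Rightarrow> bool" where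
  "set_algebra B \<longleftrightarrow> UNIV \<in> B \<and> (\<forall>X\<in>B. - X \<in> B) \<and> (\<forall>X\<in>B. \<forall>Y\<in>B. X \<inter> Y \<in> B)"

lemma set_algebraD:
  assumes "set_algebra B"
  shows set_algebra_UNIV: "UNIV \<in> B"
    and set_algebra_Compl: "X \<in> B \<Longrightarrow> - X \<in> B"
    and set_algebra_Int: "X \<in> B \<Longrightarrow> Y \<in> B \<Longrightarrow> X \<inter> Y \<in> B"
  using assms unfolding set_algebra_def by auto

context
  fixes B :: "(nat \<Rightarrow> 'u) set set" and \<nu> :: "(nat \<Rightarrow> 'u) set \<Rightarrow> real"
  assumes B: "set_algebra B" and \<nu>: "keisler B \<nu>"
begin

lemma keisler_nonneg: "X \<in> B \<Longrightarrow> 0 \<le> \<nu> X"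
  using \<nu> unfolding keisler_def by blast

lemma keisler_additive: "X \<in> B \<Longrightarrow> Y \<in> B \<Longrightarrow> X \<inter> Y = {} \<Longrightarrow> \<nu> (X \<union> Y) = \<nu> X + \<nu> Y"
  using \<nu> unfolding keisler_def by blast

lemma keisler_Int_Compl_split:
  assumes "X \<in> B" "Y \<in> B"
  shows "\<nu> X = \<nu> (X \<inter> Y) + \<nu> (X \<inter> - Y)"
proof -
  have "X \<inter> Y \<in> B" "X \<inter> - Y \<in> B"
    using assms B by (simp_all add: set_algebra_Int set_algebra_Compl)
  moreover have "X = (X \<inter> Y) \<union> (X \<inter> - Y)" by blast
  moreover have "(X \<inter> Y) \<inter> (X \<inter> - Y) = {}" by blast
  ultimately show ?thesis using keisler_additive by metis
qed

lemma keisler_Compl: "X \<in> B \<Longrightarrow> \<nu> (- X) = 1 - \<nu> X"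
  using keisler_Int_Compl_split[of UNIV X] set_algebra_UNIV[OF B] \<nu> by (simp add: keisler_def)

lemma keisler_empty: "\<nu> {} = 0"
  using keisler_Compl[OF set_algebra_UNIV[OF B]] \<nu> by (simp add: keisler_def)

lemma keisler_mono:
  assumes "X \<in> B" "Y \<in> B" "X \<subseteq> Y"
  shows "\<nu> X \<le> \<nu> Y"
proof -
  have "\<nu> Y = \<nu> X + \<nu> (Y \<inter> - X)"
    using keisler_Int_Compl_split[OF assms(2,1)] assms(3) by (simp add: Int_absorb1)
  moreover have "0 \<le> \<nu> (Y \<inter> - X)"
    using assms B by (intro keisler_nonneg) (simp add: set_algebra_Int set_algebra_Compl)
  ultimately show ?thesis by simp
qed

lemma keisler_Int_null:
  assumes "X \<in> B" "Y \<in> B" "\<nu> X = 0"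
  shows "\<nu> (Y \<inter> X) = 0"
proof -
  have "Y \<inter> X \<in> B" using assms B by (simp add: set_algebra_Int)
  then show ?thesis
    using keisler_mono[of "Y \<inter> X" X] keisler_nonneg[of "Y \<inter> X"] assms by simp
qed

lemma keisler_Int_full:
  assumes "X \<in> B" "Y \<in> B" "\<nu> Y = 1"
  shows "\<nu> (X \<inter> Y) = \<nu> X"
proof -
  have "- Y \<in> B" using assms(2) by (rule set_algebra_Compl[OF B])
  then have "\<nu> (X \<inter> - Y) = 0"
    using keisler_Int_null keisler_Compl assms by simp
  then show ?thesis using keisler_Int_Compl_split[OF assms(1,2)] by simp
qed

lemma keisler_conditional:
  assumes "P \<in> B" "0 < \<nu> P"
  shows "keisler B (\<lambda>X. \<nu> (X \<inter> P) / \<nu> P)"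
  unfolding keisler_def
proof (intro conjI ballI impI)
  fix X Y assume "X \<in> B" "Y \<in> B" "X \<inter> Y = {}"
  then have "\<nu> ((X \<inter> P) \<union> (Y \<inter> P)) = \<nu> (X \<inter> P) + \<nu> (Y \<inter> P)"
    using assms B by (intro keisler_additive) (auto simp: set_algebra_Int)
  moreover have "(X \<union> Y) \<inter> P = (X \<inter> P) \<union> (Y \<inter> P)" by blast
  ultimately show "\<nu> ((X \<union> Y) \<inter> P) / \<nu> P = \<nu> (X \<inter> P) / \<nu> P + \<nu> (Y \<inter> P) / \<nu> P"
    by (simp add: add_divide_distrib)
next
  fix X assume "X \<in> B"
  then show "0 \<le> \<nu> (X \<inter> P) / \<nu> P"
    using keisler_nonneg[OF set_algebra_Int[OF B _ assms(1)]] assms(2) by simp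
next
  show "\<nu> (UNIV \<inter> P) / \<nu> P = 1" using assms by simp
qed

end

lemma keisler_subalgebra: "B' \<subseteq> B \<Longrightarrow> keisler B \<nu> \<Longrightarrow> keisler B' \<nu>"
  unfolding keisler_def by blast

lemma keisler_convex_combination:
  assumes "keisler B \<nu>1" "keisler B \<nu>2" "0 \<le> r" "0 \<le> s" "r + s = 1"
  shows "keisler B (\<lambda>X. r * \<nu>1 X + s * \<nu>2 X)"
  using assms unfolding keisler_def by (simp add: algebra_simps)

section \<open>Ultrafilters of algebras of sets\<close>

definition proper_filter :: "'a set set \<Rightarrow> 'a set set \<Rightarrow> bool" where
  "proper_filter B q \<longleftrightarrow> q \<subseteq> B \<and> UNIV \<in> q \<and> {} \<notin> q \<and> (\<forall>X\<in>q. \<forall>Y\<in>q. X \<inter> Y \<in> q) \<and>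
     (\<forall>X\<in>q. \<forall>Y\<in>B. X \<subseteq> Y \<longrightarrow> Y \<in> q)"

lemma is_type_iff_proper_filter:
  "is_type B q \<longleftrightarrow> proper_filter B q \<and> (\<forall>X\<in>B. X \<in> q \<or> - X \<in> q)"
  unfolding is_type_def proper_filter_def by (simp only: conj_assoc)

lemma proper_filterD:
  assumes "proper_filter B q"
  shows proper_filter_subset: "q \<subseteq> B"
    and proper_filter_UNIV: "UNIV \<in> q"
    and proper_filter_not_empty: "{} \<notin> q"
    and proper_filter_Int: "X \<in> q \<Longrightarrow> Y \<in> q \<Longrightarrow> X \<inter> Y \<in> q"
    and proper_filter_upward: "X \<in> q \<Longrightarrow> Y \<in> B \<Longrightarrow> X \<subseteq> Y \<Longrightarrow> Y \<in> q"
  using assms unfolding proper_filter_def by auto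

lemma proper_filter_generated:
  assumes B: "set_algebra B" and "G \<noteq> {}" and "{} \<notin> G"
    and base: "\<And>W1 W2. W1 \<in> G \<Longrightarrow> W2 \<in> G \<Longrightarrow> \<exists>W\<in>G. W \<subseteq> W1 \<inter> W2"
  shows "proper_filter B {Z\<in>B. \<exists>W\<in>G. W \<subseteq> Z}"
  unfolding proper_filter_def
proof (intro conjI ballI impI)
  show "UNIV \<in> {Z\<in>B. \<exists>W\<in>G. W \<subseteq> Z}" using set_algebra_UNIV[OF B] \<open>G \<noteq> {}\<close> by blast
  show "{} \<notin> {Z\<in>B. \<exists>W\<in>G. W \<subseteq> Z}" using \<open>{} \<notin> G\<close> by auto
next
  fix Z1 Z2 assume "Z1 \<in> {Z\<in>B. \<exists>W\<in>G. W \<subseteq> Z}" "Z2 \<in> {Z\<in>B. \<exists>W\<in>G. W \<subseteq> Z}"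
  then obtain W1 W2 where "Z1 \<in> B" "Z2 \<in> B" "W1 \<in> G" "W2 \<in> G" "W1 \<subseteq> Z1" "W2 \<subseteq> Z2"
    by blast
  moreover obtain W where "W \<in> G" "W \<subseteq> W1 \<inter> W2" using base[OF \<open>W1 \<in> G\<close> \<open>W2 \<in> G\<close>] by blast
  ultimately have "Z1 \<inter> Z2 \<in> B" "W \<subseteq> Z1 \<inter> Z2"
    using set_algebra_Int[OF B] by auto
  with \<open>W \<in> G\<close> show "Z1 \<inter> Z2 \<in> {Z\<in>B. \<exists>W\<in>G. W \<subseteq> Z}" by blast
next
  fix Z Y assume "Z \<in> {Z\<in>B. \<exists>W\<in>G. W \<subseteq> Z}" "Y \<in> B" "Z \<subseteq> Y"
  then show "Y \<in> {Z\<in>B. \<exists>W\<in>G. W \<subseteq> Z}" by auto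
qed simp

lemma proper_filter_chain_Union:
  assumes "C \<noteq> {}" and chain: "subset.chain {q. proper_filter B q} C"
  shows "proper_filter B (\<Union>C)"
proof -
  have C: "\<And>q. q \<in> C \<Longrightarrow> proper_filter B q"
    and comparable: "\<And>q1 q2. q1 \<in> C \<Longrightarrow> q2 \<in> C \<Longrightarrow> q1 \<subseteq> q2 \<or> q2 \<subseteq> q1"
    using chain by (auto simp: subset_chain_def)
  show ?thesis
    unfolding proper_filter_def
  proof (intro conjI ballI impI)
    show "\<Union>C \<subseteq> B" using proper_filter_subset[OF C] by blast
    show "{} \<notin> \<Union>C" using proper_filter_not_empty[OF C] by blast
    show "UNIV \<in> \<Union>C" using proper_filter_UNIV[OF C] \<open>C \<noteq> {}\<close> by blast
  next
    fix X Y assume "X \<in> \<Union>C" "Y \<in> \<Union>C"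
    then obtain q1 q2 where q: "q1 \<in> C" "q2 \<in> C" "X \<in> q1" "Y \<in> q2" by blast
    then have "X \<in> q1 \<and> Y \<in> q1 \<or> X \<in> q2 \<and> Y \<in> q2"
      using comparable[OF q(1,2)] by blast
    then show "X \<inter> Y \<in> \<Union>C"
      using proper_filter_Int[OF C[OF q(1)]] proper_filter_Int[OF C[OF q(2)]] q(1,2) by blast
  next
    fix X Y assume "X \<in> \<Union>C" "Y \<in> B" "X \<subseteq> Y"
    then show "Y \<in> \<Union>C" using proper_filter_upward[OF C] by blast
  qed
qed

lemma proper_filter_extend:
  assumes B: "set_algebra B" and q: "proper_filter B q" and X: "X \<in> B" and "- X \<notin> q"
  shows "\<exists>q'. proper_filter B q' \<and> q \<subseteq> q' \<and> X \<in> q'"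
proof (intro exI conjI)
  let ?G = "(\<lambda>W. W \<inter> X) ` q"
  show "proper_filter B {Z\<in>B. \<exists>W\<in>?G. W \<subseteq> Z}"
  proof (rule proper_filter_generated[OF B])
    show "?G \<noteq> {}" using proper_filter_UNIV[OF q] by blast
    show "{} \<notin> ?G"
    proof
      assume "{} \<in> ?G"
      then obtain W where "W \<in> q" "W \<subseteq> - X" by auto
      then have "- X \<in> q" using proper_filter_upward[OF q] set_algebra_Compl[OF B X] by blast
      then show False using \<open>- X \<notin> q\<close> by contradiction
    qed
  next
    fix W1 W2 assume "W1 \<in> ?G" "W2 \<in> ?G"
    then obtain V1 V2 where "V1 \<in> q" "V2 \<in> q" "W1 = V1 \<inter> X" "W2 = V2 \<inter> X" by blast
    then have "(V1 \<inter> V2) \<inter> X \<in> ?G" "(V1 \<inter> V2) \<inter> X \<subseteq> W1 \<inter> W2"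
      using proper_filter_Int[OF q] by auto
    then show "\<exists>W\<in>?G. W \<subseteq> W1 \<inter> W2" by blast
  qed
  show "q \<subseteq> {Z\<in>B. \<exists>W\<in>?G. W \<subseteq> Z}" using proper_filter_subset[OF q] by blast
  show "X \<in> {Z\<in>B. \<exists>W\<in>?G. W \<subseteq> Z}" using proper_filter_UNIV[OF q] X by blast
qed

lemma proper_filter_extends_to_type:
  assumes B: "set_algebra B" and "proper_filter B q0"
  shows "\<exists>q. is_type B q \<and> q0 \<subseteq> q"
proof -
  let ?AA = "{q. proper_filter B q \<and> q0 \<subseteq> q}"
  have "\<exists>M\<in>?AA. \<forall>q\<in>?AA. M \<subseteq> q \<longrightarrow> q = M"
  proof (rule subset_Zorn_nonempty)
    show "?AA \<noteq> {}" using assms(2) by blast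
    fix C assume "C \<noteq> {}" and chain: "subset.chain ?AA C"
    then obtain q where "q \<in> C" "q0 \<subseteq> q" by (auto simp: subset_chain_def)
    then have "q0 \<subseteq> \<Union>C" by blast
    moreover have "subset.chain {q. proper_filter B q} C"
      using chain by (auto simp: subset_chain_def)
    ultimately show "\<Union>C \<in> ?AA"
      using proper_filter_chain_Union[OF \<open>C \<noteq> {}\<close>] by blast
  qed
  then obtain M where M: "proper_filter B M" "q0 \<subseteq> M"
    and maximal: "\<forall>q\<in>?AA. M \<subseteq> q \<longrightarrow> q = M"
    by blast
  have "X \<in> M \<or> - X \<in> M" if X: "X \<in> B" for X
  proof (rule disjCI)
    assume "- X \<notin> M"
    then obtain q where "proper_filter B q" "M \<subseteq> q" "X \<in> q"
      using proper_filter_extend[OF B M(1) X] by blast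
    moreover from this have "q \<in> ?AA" using M(2) by blast
    ultimately show "X \<in> M" using maximal by blast
  qed
  then show ?thesis
    using M by (auto simp: is_type_iff_proper_filter)
qed

lemma type_measure_positive:
  assumes B: "set_algebra B" and \<nu>: "keisler B \<nu>" and q: "is_type B q"
    and full: "\<And>Z. Z \<in> B \<Longrightarrow> \<nu> Z = 1 \<Longrightarrow> Z \<in> q" and "X \<in> q"
  shows "0 < \<nu> X"
proof (rule ccontr)
  assume "\<not> 0 < \<nu> X"
  have q: "proper_filter B q" using q by (simp add: is_type_iff_proper_filter)
  have X: "X \<in> B" using proper_filter_subset[OF q] \<open>X \<in> q\<close> by blast
  then have "\<nu> X = 0" using keisler_nonneg[OF B \<nu> X] \<open>\<not> 0 < \<nu> X\<close> by simp
  then have "- X \<in> q"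
    using full set_algebra_Compl[OF B X] keisler_Compl[OF B \<nu> X] by simp
  then have "X \<inter> - X \<in> q" using proper_filter_Int[OF q \<open>X \<in> q\<close>] by blast
  then show False using proper_filter_not_empty[OF q] by simp
qed

lemma keisler_separating_set:
  assumes B: "set_algebra B" and \<nu>1: "keisler B \<nu>1" and \<nu>2: "keisler B \<nu>2"
    and no_common_type: "\<nexists>q. is_type B q \<and> (\<forall>X\<in>q. 0 < \<nu>1 X) \<and> (\<forall>X\<in>q. 0 < \<nu>2 X)"
  shows "\<exists>P\<in>B. \<nu>1 P = 1 \<and> \<nu>2 P = 0"
proof (rule ccontr)
  assume no_separating_set: "\<not> ?thesis"
  have top: "UNIV \<in> B" "\<nu>1 UNIV = 1" "\<nu>2 UNIV = 1"
    using set_algebra_UNIV[OF B] \<nu>1 \<nu>2 unfolding keisler_def by auto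
  define G where "G = {W1 \<inter> W2 | W1 W2. W1 \<in> B \<and> W2 \<in> B \<and> \<nu>1 W1 = 1 \<and> \<nu>2 W2 = 1}"
  have G_memI: "W1 \<inter> W2 \<in> G" if "W1 \<in> B" "W2 \<in> B" "\<nu>1 W1 = 1" "\<nu>2 W2 = 1" for W1 W2
    unfolding G_def using that by blast
  define F0 where "F0 = {Z\<in>B. \<exists>W\<in>G. W \<subseteq> Z}"
  have "proper_filter B F0"
    unfolding F0_def
  proof (rule proper_filter_generated[OF B])
    show "G \<noteq> {}" using G_memI[OF top(1) top(1) top(2,3)] by blast
    show "{} \<notin> G"
    proof
      assume "{} \<in> G"
      then obtain W1 W2 where W: "W1 \<in> B" "W2 \<in> B" "\<nu>1 W1 = 1" "\<nu>2 W2 = 1" "W1 \<inter> W2 = {}"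
        unfolding G_def by blast
      then have "\<nu>2 W1 = 0"
        using keisler_Int_full[OF B \<nu>2 W(1,2)] keisler_empty[OF B \<nu>2] by simp
      then show False using no_separating_set W by blast
    qed
  next
    fix W W' assume "W \<in> G" "W' \<in> G"
    then obtain W1 W2 V1 V2 where W:
      "W1 \<in> B" "W2 \<in> B" "\<nu>1 W1 = 1" "\<nu>2 W2 = 1" "W = W1 \<inter> W2"
      "V1 \<in> B" "V2 \<in> B" "\<nu>1 V1 = 1" "\<nu>2 V2 = 1" "W' = V1 \<inter> V2"
      unfolding G_def by blast
    have "(W1 \<inter> V1) \<inter> (W2 \<inter> V2) \<in> G"
      using W by (intro G_memI set_algebra_Int[OF B])
        (simp_all add: keisler_Int_full[OF B \<nu>1] keisler_Int_full[OF B \<nu>2])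
    moreover have "(W1 \<inter> V1) \<inter> (W2 \<inter> V2) \<subseteq> W \<inter> W'"
      using W by blast
    ultimately show "\<exists>W''\<in>G. W'' \<subseteq> W \<inter> W'" by blast
  qed
  then obtain q where q: "is_type B q" and "F0 \<subseteq> q"
    using proper_filter_extends_to_type[OF B] by blast
  have "Z \<in> q" if Z: "Z \<in> B" and "\<nu>1 Z = 1 \<or> \<nu>2 Z = 1" for Z
  proof -
    have "Z \<inter> UNIV \<in> G \<or> UNIV \<inter> Z \<in> G"
      using that G_memI top by blast
    then have "Z \<in> F0" unfolding F0_def using Z by auto
    then show ?thesis using \<open>F0 \<subseteq> q\<close> by blast
  qed
  then have "\<forall>X\<in>q. 0 < \<nu>1 X" "\<forall>X\<in>q. 0 < \<nu>2 X"
    using type_measure_positive[OF B \<nu>1 q] type_measure_positive[OF B \<nu>2 q] by blast+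
  then show False using no_common_type q by blast
qed

section \<open>Definable sets\<close>

lemma Lalg_UNIV: "UNIV \<in> Lalg F R x C"
  unfolding Lalg_def by (rule CollectI, rule exI[of _ "Neg Bot"]) simp

lemma Lalg_Compl:
  fixes F :: "'f \<Rightarrow> 'u list \<Rightarrow> 'u" and R :: "'r \<Rightarrow> 'u list \<Rightarrow> bool"
  assumes "X \<in> Lalg F R x C"
  shows "- X \<in> Lalg F R x C"
proof -
  obtain \<phi> :: "('f, 'r, 'u) fm" where "X = {e. sat F R e \<phi>}" "fv \<phi> \<subseteq> set x" "params \<phi> \<subseteq> C"
    using assms unfolding Lalg_def by blast
  then have "- X = {e. sat F R e (Neg \<phi>)}" "fv (Neg \<phi>) \<subseteq> set x" "params (Neg \<phi>) \<subseteq> C"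
    by auto
  then show ?thesis unfolding Lalg_def by blast
qed

lemma Lalg_Int:
  fixes F :: "'f \<Rightarrow> 'u list \<Rightarrow> 'u" and R :: "'r \<Rightarrow> 'u list \<Rightarrow> bool"
  assumes "X \<in> Lalg F R x C" "Y \<in> Lalg F R x C"
  shows "X \<inter> Y \<in> Lalg F R x C"
proof -
  obtain \<phi> :: "('f, 'r, 'u) fm" where "X = {e. sat F R e \<phi>}" "fv \<phi> \<subseteq> set x" "params \<phi> \<subseteq> C"
    using assms(1) unfolding Lalg_def by blast
  moreover obtain \<psi> :: "('f, 'r, 'u) fm" where "Y = {e. sat F R e \<psi>}" "fv \<psi> \<subseteq> set x" "params \<psi> \<subseteq> C"
    using assms(2) unfolding Lalg_def by blast
  ultimately have "X \<inter> Y = {e. sat F R e (Conj \<phi> \<psi>)}"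
    "fv (Conj \<phi> \<psi>) \<subseteq> set x" "params (Conj \<phi> \<psi>) \<subseteq> C"
    by auto
  then show ?thesis unfolding Lalg_def by blast
qed

lemma set_algebra_Lalg: "set_algebra (Lalg F R x C)"
  unfolding set_algebra_def using Lalg_UNIV Lalg_Compl Lalg_Int by blast

lemma Lalg_mono: "set x \<subseteq> set x' \<Longrightarrow> C \<subseteq> C' \<Longrightarrow> Lalg F R x C \<subseteq> Lalg F R x' C'"
  unfolding Lalg_def by blast

lemma Lalg_subset_append: "Lalg F R y C \<subseteq> Lalg F R (x @ y) C"
  by (rule Lalg_mono) simp_all

lemma finite_tpars: "finite (tpars t)"
  by (induction t) auto

lemma finite_params: "finite (params \<phi>)"
  by (induction \<phi>) (auto simp: finite_tpars)

lemma Lalg_finite_parameters: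
  assumes "X \<in> Lalg F R x C"
  obtains b where "set b \<subseteq> C" "X \<in> Lalg F R x (set b)"
proof -
  obtain \<phi> where \<phi>: "X = {e. sat F R e \<phi>}" "fv \<phi> \<subseteq> set x" "params \<phi> \<subseteq> C"
    using assms unfolding Lalg_def by blast
  obtain b where b: "set b = params \<phi>" using finite_list[OF finite_params[of \<phi>]] by blast
  have "X \<in> Lalg F R x (set b)" unfolding Lalg_def using \<phi> b by blast
  moreover have "set b \<subseteq> C" using \<phi>(3) b by simp
  ultimately show thesis using that by blast
qed

lemma disjoint_supp_separating_set:
  assumes "\<nu>1 \<in> Mx F R y UNIV" "\<nu>2 \<in> Mx F R y UNIV" "supp F R y \<nu>1 \<inter> supp F R y \<nu>2 = {}"
  shows "\<exists>P\<in>Lalg F R y UNIV. \<nu>1 P = 1 \<and> \<nu>2 P = 0"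
  using assms by (intro keisler_separating_set set_algebra_Lalg) (auto simp: Mx_def supp_def)

section \<open>Amalgams\<close>

lemma MAm_convex_combination:
  assumes \<omega>1: "\<omega>1 \<in> MAm F R x y C" and \<omega>2: "\<omega>2 \<in> MAm F R x y C"
    and same_x: "agree (Lalg F R x C) \<omega>1 \<omega>2"
    and "0 \<le> r" "0 \<le> s" "r + s = 1"
  shows "(\<lambda>X. r * \<omega>1 X + s * \<omega>2 X) \<in> MAm F R x y C"
proof -
  have "r * \<omega>1 (X \<inter> Y) + s * \<omega>2 (X \<inter> Y) = (r * \<omega>1 X + s * \<omega>2 X) * (r * \<omega>1 Y + s * \<omega>2 Y)"
    if "X \<in> Lalg F R x C" "Y \<in> Lalg F R y C" for X Y
  proof -
    have "\<omega>1 (X \<inter> Y) = \<omega>1 X * \<omega>1 Y" "\<omega>2 (X \<inter> Y) = \<omega>1 X * \<omega>2 Y" "\<omega>2 X = \<omega>1 X"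
      using \<omega>1 \<omega>2 same_x that unfolding MAm_def agree_def by auto
    moreover have "r * \<omega>1 X + s * \<omega>1 X = \<omega>1 X"
      using \<open>r + s = 1\<close> by (metis distrib_right mult_1)
    ultimately show ?thesis by (simp add: algebra_simps)
  qed
  then show ?thesis
    using assms keisler_convex_combination unfolding MAm_def by auto
qed

lemma Amal_conditional:
  assumes \<omega>: "\<omega> \<in> MAm F R x y UNIV" and \<omega>_x: "agree (Lalg F R x UNIV) \<omega> \<mu>"
    and P: "P \<in> Lalg F R y UNIV" "0 < \<omega> P"
    and \<omega>_P: "\<forall>X\<in>Lalg F R (x @ y) A. \<omega> (X \<inter> P) = \<omega> P * lam X"
  shows "(\<lambda>X. \<omega> (X \<inter> P) / \<omega> P) \<in> Amal F R x y A lam \<mu>"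
proof -
  have keisler: "keisler (Lalg F R (x @ y) UNIV) \<omega>"
    and product: "\<And>X Y. X \<in> Lalg F R x UNIV \<Longrightarrow> Y \<in> Lalg F R y UNIV \<Longrightarrow> \<omega> (X \<inter> Y) = \<omega> X * \<omega> Y"
    using \<omega> unfolding MAm_def by auto
  have "P \<in> Lalg F R (x @ y) UNIV" using P Lalg_subset_append by blast
  then have "keisler (Lalg F R (x @ y) UNIV) (\<lambda>X. \<omega> (X \<inter> P) / \<omega> P)"
    using keisler_conditional[OF set_algebra_Lalg keisler] P(2) by blast
  moreover have x_part: "\<omega> (X \<inter> P) / \<omega> P = \<omega> X" if "X \<in> Lalg F R x UNIV" for X
    using product[OF that P(1)] P(2) by simp
  moreover have "\<omega> (X \<inter> Y \<inter> P) / \<omega> P = \<omega> (X \<inter> P) / \<omega> P * (\<omega> (Y \<inter> P) / \<omega> P)"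
    if "X \<in> Lalg F R x UNIV" "Y \<in> Lalg F R y UNIV" for X Y
    using product[OF that(1) Lalg_Int[OF that(2) P(1)]] x_part[OF that(1)] by (simp add: Int_assoc)
  ultimately show ?thesis
    using \<omega>_x \<omega>_P P(2) unfolding Amal_def MAm_def agree_def by auto
qed

lemma Amal_conditional_y_marginal:
  assumes \<omega>: "\<omega> \<in> MAm F R x y UNIV" and \<omega>_x: "agree (Lalg F R x UNIV) \<omega> \<mu>"
    and P: "P \<in> Lalg F R y UNIV"
    and \<omega>_P: "\<forall>X\<in>Lalg F R (x @ y) A. \<omega> (X \<inter> P) = \<omega> P * lam X"
    and determined: "\<forall>\<omega>'\<in>Amal F R x y A lam \<mu>. agree (Lalg F R y UNIV) \<omega>' \<nu>"
    and Y: "Y \<in> Lalg F R y UNIV"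
  shows "\<omega> (Y \<inter> P) = \<omega> P * \<nu> Y"
proof -
  have keisler: "keisler (Lalg F R (x @ y) UNIV) \<omega>" using \<omega> unfolding MAm_def by auto
  have sub: "Lalg F R y UNIV \<subseteq> Lalg F R (x @ y) UNIV" by (rule Lalg_subset_append)
  show ?thesis
  proof (cases "\<omega> P = 0")
    case True
    then show ?thesis
      using keisler_Int_null[OF set_algebra_Lalg keisler] P Y sub by auto
  next
    case False
    then have "0 < \<omega> P" using keisler_nonneg[OF set_algebra_Lalg keisler] P sub by force
    then have "(\<lambda>X. \<omega> (X \<inter> P) / \<omega> P) \<in> Amal F R x y A lam \<mu>"
      using Amal_conditional[OF \<omega> \<omega>_x P] \<omega>_P by blast
    then have "agree (Lalg F R y UNIV) (\<lambda>X. \<omega> (X \<inter> P) / \<omega> P) \<nu>" using determined by blast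
    then have "\<omega> (Y \<inter> P) / \<omega> P = \<nu> Y" using Y by (simp add: agree_def)
    then show ?thesis using False by (simp add: field_simps)
  qed
qed

lemma Amal_mixture_Int:
  assumes \<omega>: "\<omega> \<in> Amal F R x y C (\<lambda>X. r * \<omega>1 X + s * \<omega>2 X) \<mu>"
    and "A \<subseteq> C" and P: "P \<in> Lalg F R y C"
    and \<omega>1: "keisler (Lalg F R (x @ y) UNIV) \<omega>1" "\<omega>1 P = 1"
    and \<omega>2: "keisler (Lalg F R (x @ y) UNIV) \<omega>2" "\<omega>2 P = 0"
  shows "\<omega> P = r" and "\<forall>X\<in>Lalg F R (x @ y) A. \<omega> (X \<inter> P) = \<omega> P * \<omega>1 X"
proof -
  have \<omega>_C: "\<And>X. X \<in> Lalg F R (x @ y) C \<Longrightarrow> \<omega> X = r * \<omega>1 X + s * \<omega>2 X"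
    using \<omega> unfolding Amal_def agree_def by auto
  have sub: "Lalg F R (x @ y) C \<subseteq> Lalg F R (x @ y) UNIV" "Lalg F R (x @ y) A \<subseteq> Lalg F R (x @ y) C"
    using \<open>A \<subseteq> C\<close> by (simp_all add: Lalg_mono)
  have P_C: "P \<in> Lalg F R (x @ y) C" using P Lalg_subset_append by blast
  then show "\<omega> P = r" using \<omega>_C \<omega>1(2) \<omega>2(2) by simp
  show "\<forall>X\<in>Lalg F R (x @ y) A. \<omega> (X \<inter> P) = \<omega> P * \<omega>1 X"
  proof
    fix X assume "X \<in> Lalg F R (x @ y) A"
    then have X: "X \<in> Lalg F R (x @ y) C" using sub by blast
    have "X \<in> Lalg F R (x @ y) UNIV" "P \<in> Lalg F R (x @ y) UNIV" using X P_C sub by blast+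
    then have "\<omega>1 (X \<inter> P) = \<omega>1 X" "\<omega>2 (X \<inter> P) = 0"
      using keisler_Int_full[OF set_algebra_Lalg \<omega>1(1)] keisler_Int_null[OF set_algebra_Lalg \<omega>2(1)]
        \<omega>1(2) \<omega>2(2) by simp_all
    then show "\<omega> (X \<inter> P) = \<omega> P * \<omega>1 X"
      using \<omega>_C[OF Lalg_Int[OF X P_C]] \<omega>_C[OF P_C] \<omega>1(2) \<omega>2(2) by simp
  qed
qed

lemma Amal_mixture_y_marginal:
  assumes \<omega>1: "\<omega>1 \<in> Amal F R x y A lam1 \<mu>"
    and determined1: "\<forall>\<omega>\<in>Amal F R x y A lam1 \<mu>. agree (Lalg F R y UNIV) \<omega> \<nu>1"
    and \<omega>2: "\<omega>2 \<in> Amal F R x y A lam2 \<mu>"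
    and determined2: "\<forall>\<omega>\<in>Amal F R x y A lam2 \<mu>. agree (Lalg F R y UNIV) \<omega> \<nu>2"
    and "A \<subseteq> C" and P: "P \<in> Lalg F R y C" "\<nu>1 P = 1" "\<nu>2 P = 0"
    and \<omega>: "\<omega> \<in> Amal F R x y C (\<lambda>X. r * \<omega>1 X + s * \<omega>2 X) \<mu>"
  shows "agree (Lalg F R y UNIV) \<omega> (\<lambda>Y. r * \<nu>1 Y + s * \<nu>2 Y)"
proof -
  let ?B = "Lalg F R (x @ y) UNIV"
  have keisler1: "keisler ?B \<omega>1" and lam1: "\<forall>X\<in>Lalg F R (x @ y) A. \<omega>1 X = lam1 X"
    using \<omega>1 unfolding Amal_def MAm_def agree_def by auto
  have keisler2: "keisler ?B \<omega>2" and lam2: "\<forall>X\<in>Lalg F R (x @ y) A. \<omega>2 X = lam2 X"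
    using \<omega>2 unfolding Amal_def MAm_def agree_def by auto
  have \<omega>_MAm: "\<omega> \<in> MAm F R x y UNIV" and \<omega>_x: "agree (Lalg F R x UNIV) \<omega> \<mu>"
    and keisler: "keisler ?B \<omega>"
    using \<omega> unfolding Amal_def MAm_def by auto
  have P_y: "P \<in> Lalg F R y UNIV" using P(1) Lalg_mono[of y y C UNIV] by blast
  then have P_B: "P \<in> ?B" using Lalg_subset_append by blast
  have P_values: "\<omega>1 P = 1" "\<omega>2 P = 0"
    using determined1 \<omega>1 determined2 \<omega>2 P_y P(2,3) unfolding agree_def by auto
  have notP_values: "\<omega>1 (- P) = 0" "\<omega>2 (- P) = 1"
    using keisler_Compl[OF set_algebra_Lalg keisler1 P_B] keisler_Compl[OF set_algebra_Lalg keisler2 P_B]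
      P_values by simp_all
  have \<omega>_swapped: "\<omega> \<in> Amal F R x y C (\<lambda>X. s * \<omega>2 X + r * \<omega>1 X) \<mu>"
    using \<omega> by (subst add.commute)
  have on_P: "\<omega> P = r" "\<forall>X\<in>Lalg F R (x @ y) A. \<omega> (X \<inter> P) = \<omega> P * lam1 X"
    using Amal_mixture_Int[OF \<omega> \<open>A \<subseteq> C\<close> P(1) keisler1 P_values(1) keisler2 P_values(2)] lam1
    by simp_all
  have on_notP: "\<omega> (- P) = s" "\<forall>X\<in>Lalg F R (x @ y) A. \<omega> (X \<inter> - P) = \<omega> (- P) * lam2 X"
    using Amal_mixture_Int[OF \<omega>_swapped \<open>A \<subseteq> C\<close> Lalg_Compl[OF P(1)] keisler2 notP_values(2)
        keisler1 notP_values(1)] lam2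
    by simp_all
  show ?thesis
    unfolding agree_def
  proof
    fix Y assume Y: "Y \<in> Lalg F R y UNIV"
    have "\<omega> Y = \<omega> (Y \<inter> P) + \<omega> (Y \<inter> - P)"
      using keisler_Int_Compl_split[OF set_algebra_Lalg keisler _ P_B] Y Lalg_subset_append by blast
    also have "\<dots> = r * \<nu>1 Y + s * \<nu>2 Y"
      using Amal_conditional_y_marginal[OF \<omega>_MAm \<omega>_x P_y on_P(2) determined1 Y]
        Amal_conditional_y_marginal[OF \<omega>_MAm \<omega>_x Lalg_Compl[OF P_y] on_notP(2) determined2 Y]
        on_P(1) on_notP(1) by simp
    finally show "\<omega> Y = r * \<nu>1 Y + s * \<nu>2 Y" .
  qed
qed

lemma triangle_mixture:
  assumes triangle1: "triangle F R x y A \<mu> \<nu>1" and triangle2: "triangle F R x y A \<mu> \<nu>2"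
    and "A \<subseteq> C" and P: "P \<in> Lalg F R y C" "\<nu>1 P = 1" "\<nu>2 P = 0"
    and "0 \<le> r" "0 \<le> s" "r + s = 1"
  shows "triangle F R x y C \<mu> (\<lambda>Y. r * \<nu>1 Y + s * \<nu>2 Y)"
proof -
  obtain lam1 \<omega>1 where \<omega>1: "\<omega>1 \<in> Amal F R x y A lam1 \<mu>"
    and determined1: "\<forall>\<omega>\<in>Amal F R x y A lam1 \<mu>. agree (Lalg F R y UNIV) \<omega> \<nu>1"
    using triangle1 unfolding triangle_def by blast
  obtain lam2 \<omega>2 where \<omega>2: "\<omega>2 \<in> Amal F R x y A lam2 \<mu>"
    and determined2: "\<forall>\<omega>\<in>Amal F R x y A lam2 \<mu>. agree (Lalg F R y UNIV) \<omega> \<nu>2"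
    using triangle2 unfolding triangle_def by blast
  define \<omega> where "\<omega> = (\<lambda>X. r * \<omega>1 X + s * \<omega>2 X)"
  have x_marginals: "agree (Lalg F R x UNIV) \<omega>1 \<mu>" "agree (Lalg F R x UNIV) \<omega>2 \<mu>"
    using \<omega>1 \<omega>2 unfolding Amal_def by auto
  then have "\<omega> \<in> MAm F R x y UNIV"
    unfolding \<omega>_def using \<omega>1 \<omega>2 \<open>0 \<le> r\<close> \<open>0 \<le> s\<close> \<open>r + s = 1\<close>
    by (intro MAm_convex_combination) (auto simp: Amal_def agree_def)
  moreover have \<omega>_x: "agree (Lalg F R x UNIV) \<omega> \<mu>"
    using x_marginals \<open>r + s = 1\<close> unfolding \<omega>_def agree_def by (metis distrib_right mult_1)
  ultimately have "\<omega> \<in> Amal F R x y C \<omega> \<mu>" unfolding Amal_def agree_def by blast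
  moreover have "keisler (Lalg F R (x @ y) UNIV) \<omega>"
    using \<open>\<omega> \<in> MAm F R x y UNIV\<close> unfolding MAm_def by blast
  then have "\<omega> \<in> Mx F R (x @ y) C"
    unfolding Mx_def by (auto intro: keisler_subalgebra[OF Lalg_mono, rotated])
  moreover have "agree (Lalg F R x C) \<omega> \<mu>"
    using \<omega>_x Lalg_mono[of x x C UNIV] unfolding agree_def by blast
  moreover have "\<forall>\<omega>'\<in>Amal F R x y C \<omega> \<mu>. agree (Lalg F R y UNIV) \<omega>' (\<lambda>Y. r * \<nu>1 Y + s * \<nu>2 Y)"
    unfolding \<omega>_def
    using Amal_mixture_y_marginal[OF \<omega>1 determined1 \<omega>2 determined2 \<open>A \<subseteq> C\<close> P] by blast
  ultimately show ?thesis unfolding triangle_def by blast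
qed

theorem proposition5p9:
  fixes F :: "'f \<Rightarrow> 'u list \<Rightarrow> 'u" and R :: "'r \<Rightarrow> 'u list \<Rightarrow> bool" and \<kappa> :: "'k rel"
    and x y :: "nat list" and A :: "'u set"
    and \<mu> \<nu>1 \<nu>2 :: "(nat \<Rightarrow> 'u) set \<Rightarrow> real"
  assumes "monster F R \<kappa>"
    and "(card_of A, \<kappa>) \<in> ordLess"
    and "set x \<inter> set y = {}"
    and "\<mu> \<in> Mx F R x UNIV"
    and "\<nu>1 \<in> Mx F R y UNIV" and "\<nu>2 \<in> Mx F R y UNIV"
    and "supp F R y \<nu>1 \<inter> supp F R y \<nu>2 = {}"
    and "triangle F R x y A \<mu> \<nu>1" and "triangle F R x y A \<mu> \<nu>2"
  shows "\<exists>b :: 'u list. \<forall>r s :: real. 0 \<le> r \<and> 0 \<le> s \<and> r + s = 1 \<longrightarrow>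
           triangle F R x y (A \<union> set b) \<mu> (\<lambda>X. r * \<nu>1 X + s * \<nu>2 X)"
proof -
  obtain P where P: "P \<in> Lalg F R y UNIV" "\<nu>1 P = 1" "\<nu>2 P = 0"
    using disjoint_supp_separating_set[OF assms(5-7)] by blast
  obtain b where "P \<in> Lalg F R y (set b)"
    using Lalg_finite_parameters[OF P(1)] by blast
  then have "P \<in> Lalg F R y (A \<union> set b)"
    using Lalg_mono[of y y "set b" "A \<union> set b"] by blast
  then show ?thesis
    using triangle_mixture[OF assms(8,9) _ _ P(2,3)] by blast
qed

end
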